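(* Let $h>0$, $\delta_1>0$, $\theta_1\in(0,\pi)$, $\lambda_1=\delta_1e^{\mathrm{i}\theta_1/2}$, with $\lambda_1\pm\frac{2\mathrm{i}}{h\lambda_1}\neq0$, and let $\alpha_1,\beta_1\in\mathbb{C}\setminus\{0\}$. Define $$E_n(t)=\left(\frac{2-\mathrm{i}h\delta_1^2e^{\mathrm{i}\theta_1}}{2+\mathrm{i}h\delta_1^2e^{\mathrm{i}\theta_1}}\right)^{n}\exp\!\left(\frac{\mathrm{i}}{2}\Big(\delta_1^2+\frac{1}{\delta_1^2}\Big)\cos\theta_1\, t-\frac12\Big(\delta_1^2-\frac{1}{\delta_1^2}\Big)\sin\theta_1\, t\right)$$ and $$U_n=-\frac{4\mathrm{i}\delta_1\alpha_1\bar\beta_1\sin\theta_1e^{\mathrm{i}\theta_1/2}}{|\beta_1|^2(2+\mathrm{i}h\delta_1^2e^{\mathrm{i}\theta_1})E_n^{-1}+|\alpha_1|^2(2e^{\mathrm{i}\theta_1}+\mathrm{i}h\delta_1^2)\bar E_n},$$ $$R_n=-\frac{2\mathrm{i}\delta_1\alpha_1\bar\beta_1\sin\theta_1e^{\mathrm{i}\theta_1/2}}{|\beta_1|^2E_n^{-1}+|\alpha_1|^2\bar E_ne^{\mathrm{i}\theta_1}},\qquad Q_n=-\frac{2\mathrm{i}\alpha_1\bar\beta_1\sin\theta_1e^{\mathrm{i}\theta_1/2}}{\delta_1\big(|\beta_1|^2E_n^{-1}e^{\mathrm{i}\theta_1}+|\alpha_1|^2\bar E_n\big)}.$$ Then $(U_n,R_n,Q_n)$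 is a solution of the semi-discrete MTM system (at all $(n,t)$ where the denominators are nonzero).
   Context: Fix $h>0$. The semi-discrete MTM system for complex-valued differentiable functions $U_n(t),R_n(t),Q_n(t)$, $n\in\mathbb{Z}$, is $$4\mathrm{i}\frac{dU_n}{dt}+Q_{n+1}+Q_n+\frac{2\mathrm{i}}{h}(R_{n+1}-R_n)+U_n^2(\bar R_n+\bar R_{n+1})-U_n(|Q_{n+1}|^2+|Q_n|^2+|R_{n+1}|^2+|R_n|^2)-\frac{\mathrm{i}h}{2}U_n^2(\bar Q_{n+1}-\bar Q_n)=0,$$ $$-\frac{2\mathrm{i}}{h}(Q_{n+1}-Q_n)+2U_n-|U_n|^2(Q_{n+1}+Q_n)=0,\qquad R_{n+1}+R_n-2U_n+\frac{\mathrm{i}h}{2}|U_n|^2(R_{n+1}-R_n)=0.$$ *)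

theory Defs
  imports Complex_Main
begin

text \<open>Parameters: h, d = delta_1, th = theta_1, a = alpha_1, b = beta_1.
  Lattice index n :: int, time t :: real.\<close>

definition mtmE :: "real \<Rightarrow> real \<Rightarrow> real \<Rightarrow> int \<Rightarrow> real \<Rightarrow> complex" where
  "mtmE h d th n t =
     ((2 - \<i> * of_real h * of_real (d^2) * exp (\<i> * of_real th)) /
      (2 + \<i> * of_real h * of_real (d^2) * exp (\<i> * of_real th))) powi n *
     exp (\<i> / 2 * of_real ((d^2 + 1 / d^2) * cos th * t)
          - of_real (1/2 * (d^2 - 1 / d^2) * sin th * t))"

definition mtmU_den :: "real \<Rightarrow> real \<Rightarrow> real \<Rightarrow> complex \<Rightarrow> complex \<Rightarrow> int \<Rightarrow> real \<Rightarrow> complex" where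
  "mtmU_den h d th a b n t =
     of_real ((cmod b)^2) * (2 + \<i> * of_real h * of_real (d^2) * exp (\<i> * of_real th)) * inverse (mtmE h d th n t)
     + of_real ((cmod a)^2) * (2 * exp (\<i> * of_real th) + \<i> * of_real h * of_real (d^2)) * cnj (mtmE h d th n t)"

definition mtmU :: "real \<Rightarrow> real \<Rightarrow> real \<Rightarrow> complex \<Rightarrow> complex \<Rightarrow> int \<Rightarrow> real \<Rightarrow> complex" where
  "mtmU h d th a b n t =
     - (4 * \<i> * of_real d * a * cnj b * of_real (sin th) * exp (\<i> * of_real th / 2))
       / mtmU_den h d th a b n t"

definition mtmR_den :: "real \<Rightarrow> real \<Rightarrow> real \<Rightarrow> complex \<Rightarrow> complex \<Rightarrow> int \<Rightarrow> real \<Rightarrow> complex" where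
  "mtmR_den h d th a b n t =
     of_real ((cmod b)^2) * inverse (mtmE h d th n t)
     + of_real ((cmod a)^2) * cnj (mtmE h d th n t) * exp (\<i> * of_real th)"

definition mtmR :: "real \<Rightarrow> real \<Rightarrow> real \<Rightarrow> complex \<Rightarrow> complex \<Rightarrow> int \<Rightarrow> real \<Rightarrow> complex" where
  "mtmR h d th a b n t =
     - (2 * \<i> * of_real d * a * cnj b * of_real (sin th) * exp (\<i> * of_real th / 2))
       / mtmR_den h d th a b n t"

definition mtmQ_den :: "real \<Rightarrow> real \<Rightarrow> real \<Rightarrow> complex \<Rightarrow> complex \<Rightarrow> int \<Rightarrow> real \<Rightarrow> complex" where
  "mtmQ_den h d th a b n t =
     of_real d * (of_real ((cmod b)^2) * inverse (mtmE h d th n t) * exp (\<i> * of_real th)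
     + of_real ((cmod a)^2) * cnj (mtmE h d th n t))"

definition mtmQ :: "real \<Rightarrow> real \<Rightarrow> real \<Rightarrow> complex \<Rightarrow> complex \<Rightarrow> int \<Rightarrow> real \<Rightarrow> complex" where
  "mtmQ h d th a b n t =
     - (2 * \<i> * a * cnj b * of_real (sin th) * exp (\<i> * of_real th / 2))
       / mtmQ_den h d th a b n t"

definition semidiscrete_MTM_at ::
  "real \<Rightarrow> (int \<Rightarrow> real \<Rightarrow> complex) \<Rightarrow> (int \<Rightarrow> real \<Rightarrow> complex) \<Rightarrow> (int \<Rightarrow> real \<Rightarrow> complex)
   \<Rightarrow> int \<Rightarrow> real \<Rightarrow> bool" where
  "semidiscrete_MTM_at h U R Q n t \<longleftrightarrow>
     (\<exists>D. ((\<lambda>s. U n s) has_vector_derivative D) (at t) \<and>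
        4 * \<i> * D + Q (n+1) t + Q n t + 2 * \<i> / of_real h * (R (n+1) t - R n t)
        + (U n t)^2 * (cnj (R n t) + cnj (R (n+1) t))
        - U n t * of_real ((cmod (Q (n+1) t))^2 + (cmod (Q n t))^2 + (cmod (R (n+1) t))^2 + (cmod (R n t))^2)
        - \<i> * of_real h / 2 * (U n t)^2 * (cnj (Q (n+1) t) - cnj (Q n t)) = 0) \<and>
     - 2 * \<i> / of_real h * (Q (n+1) t - Q n t) + 2 * U n t
        - of_real ((cmod (U n t))^2) * (Q (n+1) t + Q n t) = 0 \<and>
     R (n+1) t + R n t - 2 * U n t
        + \<i> * of_real h / 2 * of_real ((cmod (U n t))^2) * (R (n+1) t - R n t) = 0"

end

theory Submission
  imports Defs "HOL-Analysis.Complex_Transcendental"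
begin

text \<open>Write zeta = exp(i th), eps = i h d^2/2, P_n = |b|^2/E_n and G_n = |a|^2 conj(E_n). Then
  U_n = d nu/(P_n (1 + eps zeta) + G_n (zeta + eps)), R_n = d nu/(P_n + zeta G_n) and
  Q_n = nu/(d (zeta P_n + G_n)) for a constant nu. The lattice shift multiplies P_n by
  (1 + eps zeta)/(1 - eps zeta) and G_n by (zeta + eps)/(zeta - eps), d/dt multiplies them by
  -kappa and conj kappa, and conjugation exchanges them up to a constant: conj P_n = |a b|^2/G_n.
  So every term of the system is a rational function of P_n, G_n, zeta, eps, d, and each equation
  becomes a polynomial identity after clearing denominators. The hypothesis on
  lambda +- 2i/(h lambda) says exactly that 1 +- eps zeta are nonzero.\<close>

text \<open>In the identities below u, r0, r1, q0, q1 stand for U_n, R_n, R_(n+1), Q_n, Q_(n+1) (with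
  c = d), primed names for their conjugates, uu for |U_n|^2 and du for 4 i dU_n/dt.\<close>

lemma mtm_R_identity:
  fixes P G z e c \<nu> :: "'a::field"
  defines "a1 \<equiv> 1 + e*z" and "a2 \<equiv> z + e" and "b1 \<equiv> 1 - e*z" and "b2 \<equiv> z - e"
  defines "V \<equiv> P*a1 + G*a2" and "W \<equiv> P*b2 + G*b1" and "L \<equiv> P + z*G"
  defines "L1 \<equiv> P*a1*b2 + z*G*a2*b1"
  defines "u \<equiv> c*\<nu>/V" and "uu \<equiv> - c*c*(z*z-1)^2*G*P/(z*V*W)"
    and "r0 \<equiv> c*\<nu>/L" and "r1 \<equiv> c*\<nu>*b1*b2/L1"
  assumes nz: "V \<noteq> 0" "W \<noteq> 0" "L \<noteq> 0" "L1 \<noteq> 0" "z \<noteq> 0" "c \<noteq> 0"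
  shows "r1 + r0 - 2*u + e/(c*c) * uu * (r1 - r0) = 0"
proof -
  have "(r1 + r0 - 2*u + e/(c*c) * uu * (r1 - r0)) * (z*V*W*L*L1)
      = c*\<nu>*(z*b1*b2*V*W*L + z*V*W*L1 - 2*z*W*L*L1 - e*(z*z-1)^2*G*P*(b1*b2*L - L1))"
    using nz unfolding u_def uu_def r0_def r1_def by (simp add: field_simps)
  also have "\<dots> = 0"
    unfolding V_def W_def L_def L1_def a1_def a2_def b1_def b2_def by algebra
  finally show ?thesis using nz by simp
qed

lemma mtm_Q_identity:
  fixes P G z e c \<nu> :: "'a::field"
  defines "a1 \<equiv> 1 + e*z" and "a2 \<equiv> z + e" and "b1 \<equiv> 1 - e*z" and "b2 \<equiv> z - e"
  defines "V \<equiv> P*a1 + G*a2" and "W \<equiv> P*b2 + G*b1" and "M \<equiv> z*P + G"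
  defines "M1 \<equiv> z*P*a1*b2 + G*a2*b1"
  defines "u \<equiv> c*\<nu>/V" and "uu \<equiv> - c*c*(z*z-1)^2*G*P/(z*V*W)"
    and "q0 \<equiv> \<nu>/(c*M)" and "q1 \<equiv> \<nu>*b1*b2/(c*M1)"
  assumes nz: "V \<noteq> 0" "W \<noteq> 0" "M \<noteq> 0" "M1 \<noteq> 0" "z \<noteq> 0" "e \<noteq> 0" "c \<noteq> 0"
  shows "c*c/e * (q1 - q0) + 2*u - uu * (q1 + q0) = 0"
proof -
  have "(c*c/e * (q1 - q0) + 2*u - uu * (q1 + q0)) * (e*z*V*W*M*M1)
      = c*\<nu>*(z*V*W*(b1*b2*M - M1) + 2*e*z*W*M*M1 + e*(z*z-1)^2*G*P*(b1*b2*M + M1))"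
    using nz unfolding u_def uu_def q0_def q1_def by (simp add: field_simps)
  also have "\<dots> = 0"
    unfolding V_def W_def M_def M1_def a1_def a2_def b1_def b2_def by algebra
  finally show ?thesis using nz by simp
qed

lemma mtm_U_identity_reduced:
  fixes P G z e k :: "'a::field"
  defines "a1 \<equiv> 1 + e*z" and "a2 \<equiv> z + e" and "b1 \<equiv> 1 - e*z" and "b2 \<equiv> z - e"
  defines "V \<equiv> P*a1 + G*a2" and "L \<equiv> P + z*G" and "M \<equiv> z*P + G"
  defines "L1 \<equiv> P*a1*b2 + z*G*a2*b1" and "M1 \<equiv> z*P*a1*b2 + G*a2*b1"
  defines "Vd \<equiv> -2*(k*z + 1/(k*z))*P*a1 - 2*(k/z + z/k)*G*a2"
  assumes nz: "V \<noteq> 0" "L \<noteq> 0" "M \<noteq> 0" "L1 \<noteq> 0" "M1 \<noteq> 0" "e \<noteq> 0" "k \<noteq> 0" "z \<noteq> 0"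
  shows "k*Vd/(V*V) + b1*b2/M1 + 1/M - (k*k/e)*(b1*b2/L1 - 1/L)
     - (k*k*(z*z-1)^2/(z*(V*V)))*(G*P/M + G*P*a1*a2/M1)
     + ((z*z-1)^2*(1+k*k)/(z*V))*(G*P/(L*M) + G*P*a1*a2*b1*b2/(L1*M1))
     + (e*(z*z-1)^2/(z*(V*V)))*(G*P*a1*a2/L1 - G*P/L) = 0"
proof -
  \<comment> \<open>Clearing all denominators of the whole sum at once is too expensive; each term is cleared separately.\<close>
  define X where "X = V*V*L*M*L1*M1*e*k*z"
  have "(k*Vd/(V*V) + b1*b2/M1 + 1/M - (k*k/e)*(b1*b2/L1 - 1/L)
     - (k*k*(z*z-1)^2/(z*(V*V)))*(G*P/M + G*P*a1*a2/M1)
     + ((z*z-1)^2*(1+k*k)/(z*V))*(G*P/(L*M) + G*P*a1*a2*b1*b2/(L1*M1))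
     + (e*(z*z-1)^2/(z*(V*V)))*(G*P*a1*a2/L1 - G*P/L)) * X
    = k*Vd/(V*V)*X + b1*b2/M1*X + 1/M*X - (k*k/e)*(b1*b2/L1 - 1/L)*X
     - (k*k*(z*z-1)^2/(z*(V*V)))*(G*P/M + G*P*a1*a2/M1)*X
     + ((z*z-1)^2*(1+k*k)/(z*V))*(G*P/(L*M) + G*P*a1*a2*b1*b2/(L1*M1))*X
     + (e*(z*z-1)^2/(z*(V*V)))*(G*P*a1*a2/L1 - G*P/L)*X"
    by (simp only: distrib_right left_diff_distrib)
  also have "\<dots> = (-2*(k*k*z*z+1)*P*a1 - 2*(k*k+z*z)*G*a2)*L*M*L1*M1*e*k
      + (V*V)*z*e*k*b1*b2*L*M*L1 + (V*V)*z*e*k*L*L1*M1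
      - k*k*k*z*(V*V)*M*M1*(b1*b2*L - L1)
      - k*k*(z*z-1)^2*e*k*(G*P*L*L1*M1 + G*P*a1*a2*L*M*L1)
      + (z*z-1)^2*(1+k*k)*V*e*k*(G*P*L1*M1 + G*P*a1*a2*b1*b2*L*M)
      + e*(z*z-1)^2*e*k*M*M1*(G*P*a1*a2*L - G*P*L1)"
  proof -
    have "k*Vd/(V*V)*X = (-2*(k*k*z*z+1)*P*a1 - 2*(k*k+z*z)*G*a2)*L*M*L1*M1*e*k"
      using nz unfolding X_def Vd_def by (simp add: field_simps)
    moreover have "b1*b2/M1*X = (V*V)*z*e*k*b1*b2*L*M*L1" "1/M*X = (V*V)*z*e*k*L*L1*M1"
      using nz unfolding X_def by (simp_all add: field_simps)
    moreover have "(k*k/e)*(b1*b2/L1 - 1/L)*X = k*k*k*z*(V*V)*M*M1*(b1*b2*L - L1)"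
      using nz unfolding X_def by (simp add: field_simps)
    moreover have "(k*k*(z*z-1)^2/(z*(V*V)))*(G*P/M + G*P*a1*a2/M1)*X
        = k*k*(z*z-1)^2*e*k*(G*P*L*L1*M1 + G*P*a1*a2*L*M*L1)"
      using nz unfolding X_def by (simp add: field_simps)
    moreover have "((z*z-1)^2*(1+k*k)/(z*V))*(G*P/(L*M) + G*P*a1*a2*b1*b2/(L1*M1))*X
        = (z*z-1)^2*(1+k*k)*V*e*k*(G*P*L1*M1 + G*P*a1*a2*b1*b2*L*M)"
      using nz unfolding X_def by (simp add: field_simps)
    moreover have "(e*(z*z-1)^2/(z*(V*V)))*(G*P*a1*a2/L1 - G*P/L)*X
        = e*(z*z-1)^2*e*k*M*M1*(G*P*a1*a2*L - G*P*L1)"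
      using nz unfolding X_def by (simp add: field_simps)
    ultimately show ?thesis by simp
  qed
  also have "\<dots> = 0"
    unfolding V_def L_def M_def L1_def M1_def a1_def a2_def b1_def b2_def by algebra
  finally show ?thesis using nz unfolding X_def by simp
qed

lemma mtm_U_identity:
  fixes P G z e c \<nu> :: "'a::field"
  defines "a1 \<equiv> 1 + e*z" and "a2 \<equiv> z + e" and "b1 \<equiv> 1 - e*z" and "b2 \<equiv> z - e"
  defines "V \<equiv> P*a1 + G*a2" and "L \<equiv> P + z*G" and "M \<equiv> z*P + G"
  defines "L1 \<equiv> P*a1*b2 + z*G*a2*b1" and "M1 \<equiv> z*P*a1*b2 + G*a2*b1"
  defines "du \<equiv> c*\<nu>*(-2*(c*c*z + 1/(c*c*z))*P*a1 - 2*(c*c/z + z/(c*c))*G*a2)/(V*V)"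
    and "u \<equiv> c*\<nu>/V" and "r0 \<equiv> c*\<nu>/L" and "r1 \<equiv> c*\<nu>*b1*b2/L1"
    and "q0 \<equiv> \<nu>/(c*M)" and "q1 \<equiv> \<nu>*b1*b2/(c*M1)"
    and "r0' \<equiv> - c*(z*z-1)^2*G*P/(z*\<nu>*M)" and "r1' \<equiv> - c*(z*z-1)^2*G*P*a1*a2/(z*\<nu>*M1)"
    and "q0' \<equiv> - G*P*(z*z-1)^2/(c*z*\<nu>*L)" and "q1' \<equiv> - G*P*a1*a2*(z*z-1)^2/(c*z*\<nu>*L1)"
  assumes nz: "V \<noteq> 0" "L \<noteq> 0" "M \<noteq> 0" "L1 \<noteq> 0" "M1 \<noteq> 0" "e \<noteq> 0" "c \<noteq> 0" "z \<noteq> 0" "\<nu> \<noteq> 0"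
  shows "du + q1 + q0 - c*c/e * (r1 - r0) + u^2 * (r0' + r1')
     - u * (q1*q1' + q0*q0' + r1*r1' + r0*r0') - e/(c*c) * u^2 * (q1' - q0') = 0"
proof -
  define x where "x = \<nu>/c"
  have combine: "A1 + A2 + A3 - A4 + A5 - A6 - A7 = x * (B1 + B2 + B3 - B4 - B5 + B6 + B7)"
    if "A1 = x*B1" "A2 = x*B2" "A3 = x*B3" "A4 = x*B4" "A5 = - x*B5" "A6 = - x*B6" "A7 = - x*B7"
    for A1 A2 A3 A4 A5 A6 A7 B1 B2 B3 B4 B5 B6 B7 :: 'a
    using that by (simp add: algebra_simps)
  have "du + q1 + q0 - c*c/e * (r1 - r0) + u^2 * (r0' + r1')
     - u * (q1*q1' + q0*q0' + r1*r1' + r0*r0') - e/(c*c) * u^2 * (q1' - q0')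
     = x * ((c*c)*(-2*((c*c)*z + 1/((c*c)*z))*P*a1 - 2*((c*c)/z + z/(c*c))*G*a2)/(V*V) + b1*b2/M1 + 1/M
        - ((c*c)*(c*c)/e)*(b1*b2/L1 - 1/L)
        - ((c*c)*(c*c)*(z*z-1)^2/(z*(V*V)))*(G*P/M + G*P*a1*a2/M1)
        + ((z*z-1)^2*(1+(c*c)*(c*c))/(z*V))*(G*P/(L*M) + G*P*a1*a2*b1*b2/(L1*M1))
        + (e*(z*z-1)^2/(z*(V*V)))*(G*P*a1*a2/L1 - G*P/L))"
  proof (rule combine)
    show "du = x * ((c*c)*(-2*((c*c)*z + 1/((c*c)*z))*P*a1 - 2*((c*c)/z + z/(c*c))*G*a2)/(V*V))"
      "q1 = x * (b1*b2/M1)" "q0 = x * (1/M)"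
      "c*c/e * (r1 - r0) = x * ((c*c)*(c*c)/e*(b1*b2/L1 - 1/L))"
      using nz unfolding x_def du_def q1_def q0_def r1_def r0_def by (simp_all add: field_simps)
    show "u^2 * (r0' + r1') = - x * (((c*c)*(c*c)*(z*z-1)^2/(z*(V*V)))*(G*P/M + G*P*a1*a2/M1))"
      using nz unfolding x_def u_def r0'_def r1'_def by (simp add: field_simps power2_eq_square)
    show "u * (q1*q1' + q0*q0' + r1*r1' + r0*r0')
        = - x * (((z*z-1)^2*(1+(c*c)*(c*c))/(z*V))*(G*P/(L*M) + G*P*a1*a2*b1*b2/(L1*M1)))"
      using nz unfolding x_def u_def q0_def q1_def r0_def r1_def q0'_def q1'_def r0'_def r1'_def
      by (simp add: field_simps)
    show "e/(c*c) * u^2 * (q1' - q0') = - x * ((e*(z*z-1)^2/(z*(V*V)))*(G*P*a1*a2/L1 - G*P/L))"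
      using nz unfolding x_def u_def q0'_def q1'_def by (simp add: field_simps power2_eq_square)
  qed
  also have "\<dots> = 0"
    using mtm_U_identity_reduced[of P e z G "c*c"] nz
    unfolding a1_def a2_def b1_def b2_def V_def L_def M_def L1_def M1_def by simp
  finally show ?thesis .
qed

locale mtm_one_soliton =
  fixes h d th :: real and a b :: complex
  assumes h_pos: "h > 0" and d_pos: "d > 0" and th_pos: "0 < th" and th_less_pi: "th < pi"
    and spectral_nondegenerate: "\<And>l. l = of_real d * exp (\<i> * of_real th / 2) \<Longrightarrow>
           l + 2 * \<i> / (of_real h * l) \<noteq> 0 \<and> l - 2 * \<i> / (of_real h * l) \<noteq> 0"
    and a_nonzero: "a \<noteq> 0" and b_nonzero: "b \<noteq> 0"
begin

definition \<zeta> :: complex where "\<zeta> = exp (\<i> * of_real th)"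
definition \<epsilon> :: complex where "\<epsilon> = \<i> * of_real h * of_real (d^2) / 2"
definition \<kappa> :: complex where "\<kappa> = \<i> / 2 * (of_real (d^2) * \<zeta> + 1 / (of_real (d^2) * \<zeta>))"
definition \<mu> :: complex where "\<mu> = of_real ((cmod a)^2 * (cmod b)^2)"
definition \<nu> :: complex where "\<nu> = - (2 * \<i> * a * cnj b * of_real (sin th) * exp (\<i> * of_real th / 2))"
definition P :: "int \<Rightarrow> real \<Rightarrow> complex" where "P k t = of_real ((cmod b)^2) * inverse (mtmE h d th k t)"
definition G :: "int \<Rightarrow> real \<Rightarrow> complex" where "G k t = of_real ((cmod a)^2) * cnj (mtmE h d th k t)"

abbreviation V :: "int \<Rightarrow> real \<Rightarrow> complex" where "V k t \<equiv> P k t * (1 + \<epsilon>*\<zeta>) + G k t * (\<zeta> + \<epsilon>)"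
abbreviation W :: "int \<Rightarrow> real \<Rightarrow> complex" where "W k t \<equiv> P k t * (\<zeta> - \<epsilon>) + G k t * (1 - \<epsilon>*\<zeta>)"

abbreviation L :: "int \<Rightarrow> real \<Rightarrow> complex" where "L k t \<equiv> P k t + \<zeta> * G k t"
abbreviation M :: "int \<Rightarrow> real \<Rightarrow> complex" where "M k t \<equiv> \<zeta> * P k t + G k t"
abbreviation L1 :: "int \<Rightarrow> real \<Rightarrow> complex" where
  "L1 k t \<equiv> P k t * (1 + \<epsilon>*\<zeta>) * (\<zeta> - \<epsilon>) + \<zeta> * G k t * (\<zeta> + \<epsilon>) * (1 - \<epsilon>*\<zeta>)"
abbreviation M1 :: "int \<Rightarrow> real \<Rightarrow> complex" where
  "M1 k t \<equiv> \<zeta> * P k t * (1 + \<epsilon>*\<zeta>) * (\<zeta> - \<epsilon>) + G k t * (\<zeta> + \<epsilon>) * (1 - \<epsilon>*\<zeta>)"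

lemma zeta_nonzero: "\<zeta> \<noteq> 0"
  by (simp add: \<zeta>_def)

lemma cnj_zeta: "cnj \<zeta> = inverse \<zeta>"
  by (simp add: \<zeta>_def exp_cnj exp_minus)

lemma cnj_eps: "cnj \<epsilon> = - \<epsilon>"
  by (simp add: \<epsilon>_def)

lemma eps_nonzero: "\<epsilon> \<noteq> 0"
  using h_pos d_pos by (simp add: \<epsilon>_def)

lemma sin_th_eq: "of_real (sin th) = (\<zeta> - inverse \<zeta>) / (2*\<i>)"
  by (simp add: \<zeta>_def sin_exp_eq exp_minus flip: sin_of_real)

lemma cos_th_eq: "of_real (cos th) = (\<zeta> + inverse \<zeta>) / 2"
  by (simp add: \<zeta>_def cos_exp_eq exp_minus flip: cos_of_real)

lemma one_eps_zeta_nonzero: "1 + \<epsilon>*\<zeta> \<noteq> 0" "1 - \<epsilon>*\<zeta> \<noteq> 0"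
proof -
  define l where "l = of_real d * exp (\<i> * of_real th / 2)"
  have l0: "l \<noteq> 0" using d_pos by (simp add: l_def)
  have c0: "\<i> * of_real h * l / 2 \<noteq> 0" using h_pos l0 by simp
  have "l * l = of_real (d^2) * \<zeta>"
    by (simp add: l_def \<zeta>_def power2_eq_square algebra_simps flip: exp_add)
  then have "1 + \<epsilon>*\<zeta> = \<i> * of_real h * l / 2 * (l - 2 * \<i> / (of_real h * l))"
     and "\<epsilon>*\<zeta> - 1 = \<i> * of_real h * l / 2 * (l + 2 * \<i> / (of_real h * l))"
    using h_pos l0 by (simp_all add: \<epsilon>_def field_simps)
  with spectral_nondegenerate[OF l_def] c0 have "1 + \<epsilon>*\<zeta> \<noteq> 0" "\<epsilon>*\<zeta> - 1 \<noteq> 0"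
    by (metis mult_eq_0_iff)+
  then show "1 + \<epsilon>*\<zeta> \<noteq> 0" "1 - \<epsilon>*\<zeta> \<noteq> 0" by simp_all
qed

lemma zeta_eps_nonzero: "\<zeta> + \<epsilon> \<noteq> 0" "\<zeta> - \<epsilon> \<noteq> 0"
proof -
  have "\<zeta> + \<epsilon> = \<zeta> * cnj (1 - \<epsilon>*\<zeta>)" "\<zeta> - \<epsilon> = \<zeta> * cnj (1 + \<epsilon>*\<zeta>)"
    using zeta_nonzero by (simp_all add: cnj_eps cnj_zeta algebra_simps)
  with one_eps_zeta_nonzero zeta_nonzero show "\<zeta> + \<epsilon> \<noteq> 0" "\<zeta> - \<epsilon> \<noteq> 0"
    by (metis mult_eq_0_iff complex_cnj_zero_iff)+
qed

lemma mtmE_eq: "mtmE h d th k t = ((1 - \<epsilon>*\<zeta>) / (1 + \<epsilon>*\<zeta>)) powi k * exp (of_real t * \<kappa>)"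
proof -
  have num_den: "2 - \<i> * of_real h * of_real (d^2) * exp (\<i> * of_real th) = 2 * (1 - \<epsilon>*\<zeta>)"
    "2 + \<i> * of_real h * of_real (d^2) * exp (\<i> * of_real th) = 2 * (1 + \<epsilon>*\<zeta>)"
    by (simp_all add: \<epsilon>_def \<zeta>_def algebra_simps)
  have "(2 - \<i> * of_real h * of_real (d^2) * exp (\<i> * of_real th)) /
      (2 + \<i> * of_real h * of_real (d^2) * exp (\<i> * of_real th)) = (1 - \<epsilon>*\<zeta>) / (1 + \<epsilon>*\<zeta>)"
    unfolding num_den by (rule mult_divide_mult_cancel_left) simp
  moreover have "\<i> / 2 * of_real ((d^2 + 1 / d^2) * cos th * t) - of_real (1/2 * (d^2 - 1 / d^2) * sin th * t)
      = of_real t * \<kappa>"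
    using d_pos zeta_nonzero by (simp add: \<kappa>_def sin_th_eq cos_th_eq field_simps)
  ultimately show ?thesis unfolding mtmE_def by simp
qed

lemma mtmE_nonzero: "mtmE h d th k t \<noteq> 0"
  using one_eps_zeta_nonzero by (simp add: mtmE_eq)

lemma P_nonzero: "P k t \<noteq> 0" and G_nonzero: "G k t \<noteq> 0"
  using a_nonzero b_nonzero mtmE_nonzero by (simp_all add: P_def G_def)

lemma cnj_P: "cnj (P k t) = \<mu> / G k t" and cnj_G: "cnj (G k t) = \<mu> / P k t"
  using a_nonzero b_nonzero mtmE_nonzero by (simp_all add: P_def G_def \<mu>_def field_simps)

lemma mtmE_succ: "mtmE h d th (k+1) t = (1 - \<epsilon>*\<zeta>) / (1 + \<epsilon>*\<zeta>) * mtmE h d th k t"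
  using one_eps_zeta_nonzero by (simp add: mtmE_eq power_int_add)

lemma P_succ: "P (k+1) t = P k t * (1 + \<epsilon>*\<zeta>) / (1 - \<epsilon>*\<zeta>)"
  unfolding P_def mtmE_succ using one_eps_zeta_nonzero by (simp add: field_simps)

lemma G_succ: "G (k+1) t = G k t * (\<zeta> + \<epsilon>) / (\<zeta> - \<epsilon>)"
proof -
  have "cnj ((1 - \<epsilon>*\<zeta>) / (1 + \<epsilon>*\<zeta>)) = (\<zeta> + \<epsilon>) / (\<zeta> - \<epsilon>)"
    using zeta_nonzero zeta_eps_nonzero by (simp add: cnj_eps cnj_zeta field_simps)
  then show ?thesis
    unfolding G_def mtmE_succ complex_cnj_mult by (simp add: field_simps)
qed

lemma P_exp: "P k t = P k 0 * exp (of_real t * - \<kappa>)"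
  by (simp add: P_def mtmE_eq exp_minus)

lemma G_exp: "G k t = G k 0 * exp (of_real t * cnj \<kappa>)"
  by (simp add: G_def mtmE_eq exp_cnj)

lemma mtmR_den_eq: "mtmR_den h d th a b k t = L k t"
  by (simp add: mtmR_den_def P_def G_def \<zeta>_def mult.commute)

lemma mtmQ_den_eq: "mtmQ_den h d th a b k t = of_real d * M k t"
  by (simp add: mtmQ_den_def P_def G_def \<zeta>_def algebra_simps)

lemma mtmU_den_eq: "mtmU_den h d th a b k t = 2 * V k t"
  by (simp add: mtmU_den_def P_def G_def \<zeta>_def \<epsilon>_def algebra_simps power2_eq_square)

lemma mtmR_eq: "mtmR h d th a b k t = of_real d * \<nu> / L k t"
  by (simp add: mtmR_def mtmR_den_eq \<nu>_def)

lemma mtmQ_eq: "mtmQ h d th a b k t = \<nu> / (of_real d * M k t)"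
  by (simp add: mtmQ_def mtmQ_den_eq \<nu>_def)

lemma mtmU_eq: "mtmU h d th a b k t = of_real d * \<nu> / V k t"
proof -
  have "mtmU h d th a b k t = (2 * (of_real d * \<nu>)) / (2 * V k t)"
    by (simp add: mtmU_def mtmU_den_eq \<nu>_def)
  then show ?thesis by (metis mult_divide_mult_cancel_left zero_neq_numeral)
qed

lemma mu_nonzero: "\<mu> \<noteq> 0"
  using a_nonzero b_nonzero by (simp add: \<mu>_def)

lemma nu_nonzero: "\<nu> \<noteq> 0"
  using a_nonzero b_nonzero sin_gt_zero[OF th_pos th_less_pi] by (simp add: \<nu>_def)

lemma cnj_nu: "cnj \<nu> = - \<mu> * (\<zeta>*\<zeta> - 1)^2 / (\<zeta>*\<zeta>*\<nu>)"
proof -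
  have "\<nu> * cnj \<nu> = 4 * (a * cnj a) * (b * cnj b) * (of_real (sin th))^2"
    by (simp add: \<nu>_def exp_cnj power2_eq_square algebra_simps flip: exp_add)
  also have "\<dots> = - \<mu> * (\<zeta>*\<zeta> - 1)^2 / (\<zeta>*\<zeta>)"
    using zeta_nonzero
    by (simp add: \<mu>_def sin_th_eq flip: complex_norm_square) (simp add: field_simps power2_eq_square)
  finally show ?thesis
    using nu_nonzero zeta_nonzero by (simp add: field_simps)
qed

lemma cnj_R_denominator: "cnj (L k t) = \<mu> * M k t / (\<zeta> * G k t * P k t)"
  using zeta_nonzero P_nonzero G_nonzero by (simp add: cnj_P cnj_G cnj_zeta field_simps)

lemma cnj_Q_denominator: "cnj (M k t) = \<mu> * L k t / (\<zeta> * G k t * P k t)"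
  using zeta_nonzero P_nonzero G_nonzero by (simp add: cnj_P cnj_G cnj_zeta field_simps)

lemma cnj_V: "cnj (V k t) = \<mu> * W k t / (\<zeta> * G k t * P k t)"
  using zeta_nonzero P_nonzero G_nonzero by (simp add: cnj_P cnj_G cnj_zeta cnj_eps field_simps)

lemma W_nonzero: "V k t \<noteq> 0 \<Longrightarrow> W k t \<noteq> 0"
  using cnj_V by (metis complex_cnj_zero_iff div_0 mult_zero_right)

lemma cnj_mtmR:
  assumes "M k t \<noteq> 0"
  shows "cnj (mtmR h d th a b k t) = - of_real d * (\<zeta>*\<zeta> - 1)^2 * G k t * P k t / (\<zeta> * \<nu> * M k t)"
proof -
  have "cnj (mtmR h d th a b k t) = of_real d * cnj \<nu> / cnj (L k t)"
    by (simp add: mtmR_eq)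
  then show ?thesis
    unfolding cnj_R_denominator cnj_nu
    using assms zeta_nonzero mu_nonzero nu_nonzero P_nonzero G_nonzero
    by (simp add: divide_simps) (simp add: algebra_simps)
qed

lemma cnj_mtmQ:
  assumes "L k t \<noteq> 0"
  shows "cnj (mtmQ h d th a b k t) = - G k t * P k t * (\<zeta>*\<zeta> - 1)^2 / (of_real d * \<zeta> * \<nu> * L k t)"
proof -
  have "cnj (mtmQ h d th a b k t) = cnj \<nu> / (of_real d * cnj (M k t))"
    by (simp add: mtmQ_eq)
  then show ?thesis
    unfolding cnj_Q_denominator cnj_nu
    using assms zeta_nonzero mu_nonzero nu_nonzero P_nonzero G_nonzero d_pos
    by (simp add: divide_simps) (simp add: algebra_simps)
qed

lemma norm_mtmU_sq:
  assumes "V n t \<noteq> 0"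
  shows "of_real ((cmod (mtmU h d th a b n t))^2)
           = - of_real d * of_real d * (\<zeta>*\<zeta> - 1)^2 * G n t * P n t / (\<zeta> * V n t * W n t)"
proof -
  have "of_real ((cmod (mtmU h d th a b n t))^2) = of_real d * \<nu> / V n t * (of_real d * cnj \<nu> / cnj (V n t))"
    unfolding complex_norm_square by (simp add: mtmU_eq)
  then show ?thesis
    unfolding cnj_V cnj_nu
    using assms W_nonzero[OF assms] zeta_nonzero mu_nonzero nu_nonzero P_nonzero G_nonzero
    by (simp add: divide_simps) (simp add: algebra_simps power2_eq_square)
qed

lemma mtmU_has_vector_derivative:
  assumes "V n t \<noteq> 0"
  shows "((\<lambda>s. mtmU h d th a b n s) has_vector_derivative
           of_real d * \<nu> * (\<kappa> * P n t * (1 + \<epsilon>*\<zeta>) - cnj \<kappa> * G n t * (\<zeta> + \<epsilon>)) / (V n t)^2) (at t)"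
proof -
  define den where "den x = P n 0 * (1 + \<epsilon>*\<zeta>) * exp (x * - \<kappa>) + G n 0 * (\<zeta> + \<epsilon>) * exp (x * cnj \<kappa>)" for x
  have V_den: "V n s = den (of_real s)" for s
    by (simp add: den_def P_exp[of n s] G_exp[of n s] algebra_simps)
  have "((\<lambda>x. of_real d * \<nu> / den x) has_field_derivative
          of_real d * \<nu> * (\<kappa> * P n t * (1 + \<epsilon>*\<zeta>) - cnj \<kappa> * G n t * (\<zeta> + \<epsilon>)) / (V n t)^2) (at (of_real t))"
    unfolding den_def using assms
    by (auto intro!: derivative_eq_intros simp: V_den den_def P_exp[of n t] G_exp[of n t] field_simps power2_eq_square)
  from has_vector_derivative_real_field[OF this] show ?thesis
    by (simp add: mtmU_eq V_den)
qed

lemma R_denominator_succ: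
  "L (k+1) t = L1 k t / ((1 - \<epsilon>*\<zeta>) * (\<zeta> - \<epsilon>))"
  unfolding P_succ G_succ using one_eps_zeta_nonzero zeta_eps_nonzero by (simp add: field_simps)

lemma Q_denominator_succ:
  "M (k+1) t = M1 k t / ((1 - \<epsilon>*\<zeta>) * (\<zeta> - \<epsilon>))"
  unfolding P_succ G_succ using one_eps_zeta_nonzero zeta_eps_nonzero by (simp add: field_simps)

lemma i_h_half: "\<i> * of_real h / 2 = \<epsilon> / (of_real d * of_real d)"
  using d_pos by (simp add: \<epsilon>_def field_simps power2_eq_square)

lemma mtmR_succ_eq:
  "mtmR h d th a b (k+1) t = of_real d * \<nu> * (1 - \<epsilon>*\<zeta>) * (\<zeta> - \<epsilon>) / L1 k t"
  by (simp add: mtmR_eq R_denominator_succ)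

lemma mtm_R_equation:
  assumes "V n t \<noteq> 0" "L n t \<noteq> 0" "L (n+1) t \<noteq> 0"
  shows "mtmR h d th a b (n+1) t + mtmR h d th a b n t - 2 * mtmU h d th a b n t
     + \<i> * of_real h / 2 * of_real ((cmod (mtmU h d th a b n t))^2)
       * (mtmR h d th a b (n+1) t - mtmR h d th a b n t) = 0"
proof -
  have "L1 n t \<noteq> 0"
    using assms(3) by (simp add: R_denominator_succ)
  with mtm_R_identity[of "P n t" \<epsilon> \<zeta> "G n t" "of_real d" \<nu>]
    assms(1,2) W_nonzero[OF assms(1)] zeta_nonzero d_pos
  show ?thesis
    unfolding norm_mtmU_sq[OF assms(1)] i_h_half mtmR_succ_eq
    by (simp add: mtmR_eq mtmU_eq)
qed

lemma mtmQ_succ_eq: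
  "mtmQ h d th a b (k+1) t = \<nu> * (1 - \<epsilon>*\<zeta>) * (\<zeta> - \<epsilon>)
     / (of_real d * M1 k t)"
  by (simp add: mtmQ_eq Q_denominator_succ)

lemma minus_two_i_over_h: "- 2 * \<i> / of_real h = of_real d * of_real d / \<epsilon>"
  using d_pos h_pos by (simp add: \<epsilon>_def field_simps power2_eq_square)

lemma mtm_Q_equation:
  assumes "V n t \<noteq> 0" "M n t \<noteq> 0" "M (n+1) t \<noteq> 0"
  shows "- 2 * \<i> / of_real h * (mtmQ h d th a b (n+1) t - mtmQ h d th a b n t) + 2 * mtmU h d th a b n t
     - of_real ((cmod (mtmU h d th a b n t))^2) * (mtmQ h d th a b (n+1) t + mtmQ h d th a b n t) = 0"
proof -
  have "M1 n t \<noteq> 0"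
    using assms(3) by (simp add: Q_denominator_succ)
  with mtm_Q_identity[of "P n t" \<epsilon> \<zeta> "G n t" "of_real d" \<nu>]
    assms(1,2) W_nonzero[OF assms(1)] zeta_nonzero eps_nonzero d_pos
  show ?thesis
    unfolding norm_mtmU_sq[OF assms(1)] minus_two_i_over_h mtmQ_succ_eq
    by (simp add: mtmQ_eq mtmU_eq)
qed

lemma GP_succ: "G (k+1) t * P (k+1) t = G k t * P k t * (1 + \<epsilon>*\<zeta>) * (\<zeta> + \<epsilon>) / ((1 - \<epsilon>*\<zeta>) * (\<zeta> - \<epsilon>))"
  unfolding P_succ G_succ by (simp add: field_simps)

lemma cnj_mtmR_succ:
  assumes "M (k+1) t \<noteq> 0"
  shows "cnj (mtmR h d th a b (k+1) t) = - of_real d * (\<zeta>*\<zeta> - 1)^2 * G k t * P k t * (1 + \<epsilon>*\<zeta>) * (\<zeta> + \<epsilon>)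
     / (\<zeta> * \<nu> * M1 k t)"
  using cnj_mtmR[OF assms] one_eps_zeta_nonzero zeta_eps_nonzero
  by (simp add: mult.assoc GP_succ Q_denominator_succ)

lemma cnj_mtmQ_succ:
  assumes "L (k+1) t \<noteq> 0"
  shows "cnj (mtmQ h d th a b (k+1) t) = - G k t * P k t * (1 + \<epsilon>*\<zeta>) * (\<zeta> + \<epsilon>) * (\<zeta>*\<zeta> - 1)^2
     / (of_real d * \<zeta> * \<nu> * L1 k t)"
  using cnj_mtmQ[OF assms] one_eps_zeta_nonzero zeta_eps_nonzero
  by (simp add: GP_succ R_denominator_succ)

lemma four_i_kappa:
  "4 * \<i> * \<kappa> = -2 * (of_real d * of_real d * \<zeta> + 1 / (of_real d * of_real d * \<zeta>))"
  "4 * \<i> * cnj \<kappa> = 2 * (of_real d * of_real d / \<zeta> + \<zeta> / (of_real d * of_real d))"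
  using zeta_nonzero by (simp_all add: \<kappa>_def cnj_zeta field_simps power2_eq_square)

lemma two_i_over_h: "2 * \<i> / of_real h = - (of_real d * of_real d / \<epsilon>)"
  using d_pos h_pos by (simp add: \<epsilon>_def field_simps power2_eq_square)

lemma mtm_U_equation:
  assumes "V n t \<noteq> 0" "L n t \<noteq> 0" "L (n+1) t \<noteq> 0"
    and "M n t \<noteq> 0" "M (n+1) t \<noteq> 0"
  shows "\<exists>D. ((\<lambda>s. mtmU h d th a b n s) has_vector_derivative D) (at t) \<and>
    4 * \<i> * D + mtmQ h d th a b (n+1) t + mtmQ h d th a b n t
    + 2 * \<i> / of_real h * (mtmR h d th a b (n+1) t - mtmR h d th a b n t)
    + (mtmU h d th a b n t)^2 * (cnj (mtmR h d th a b n t) + cnj (mtmR h d th a b (n+1) t))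
    - mtmU h d th a b n t * of_real ((cmod (mtmQ h d th a b (n+1) t))^2 + (cmod (mtmQ h d th a b n t))^2
        + (cmod (mtmR h d th a b (n+1) t))^2 + (cmod (mtmR h d th a b n t))^2)
    - \<i> * of_real h / 2 * (mtmU h d th a b n t)^2 * (cnj (mtmQ h d th a b (n+1) t) - cnj (mtmQ h d th a b n t)) = 0"
proof -
  let ?x = "of_real d * \<nu>" and ?a1 = "1 + \<epsilon>*\<zeta>" and ?a2 = "\<zeta> + \<epsilon>"
  have "4 * \<i> * (x * (\<kappa> * p * a1 - cnj \<kappa> * g * a2) / v^2)
     = x * (4 * \<i> * \<kappa> * p * a1 - 4 * \<i> * cnj \<kappa> * g * a2) / (v * v)" for x p g v a1 a2 :: complex
    by (simp add: power2_eq_square algebra_simps)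
  then have four_i_D: "4 * \<i> * (?x * (\<kappa> * P n t * ?a1 - cnj \<kappa> * G n t * ?a2) / (V n t)^2)
    = ?x * (-2 * (of_real d * of_real d * \<zeta> + 1 / (of_real d * of_real d * \<zeta>)) * P n t * ?a1
      - 2 * (of_real d * of_real d / \<zeta> + \<zeta> / (of_real d * of_real d)) * G n t * ?a2) / (V n t * V n t)"
    unfolding four_i_kappa by simp
  have L1_nz: "L1 n t \<noteq> 0"
    using assms(3) by (simp add: R_denominator_succ)
  have M1_nz: "M1 n t \<noteq> 0"
    using assms(5) by (simp add: Q_denominator_succ)
  have "of_real d \<noteq> (0::complex)"
    using d_pos by simp
  note identity = mtm_U_identity[where P="P n t" and G="G n t" and z=\<zeta> and e=\<epsilon> and c="of_real d" and \<nu>=\<nu>,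
      OF assms(1,2,4) L1_nz M1_nz eps_nonzero this zeta_nonzero nu_nonzero]
  show ?thesis
    by (rule exI, rule conjI[OF mtmU_has_vector_derivative[OF assms(1)]])
      (unfold of_real_add complex_norm_square,
       unfold cnj_mtmR[OF assms(4)] cnj_mtmR_succ[OF assms(5)] cnj_mtmQ[OF assms(2)] cnj_mtmQ_succ[OF assms(3)],
       unfold mtmQ_succ_eq mtmR_succ_eq,
       unfold four_i_D mtmQ_eq mtmR_eq mtmU_eq two_i_over_h i_h_half,
       use identity in \<open>simp only: mult_minus_left add_uminus_conv_diff\<close>)
qed

end

theorem mainTheorem6:
  fixes h d th :: real and a b :: complex and n :: int and t :: real
  assumes "h > 0" and "d > 0" and "0 < th" and "th < pi"
    and "\<And>l. l = of_real d * exp (\<i> * of_real th / 2) \<Longrightarrow>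
           l + 2 * \<i> / (of_real h * l) \<noteq> 0 \<and> l - 2 * \<i> / (of_real h * l) \<noteq> 0"
    and "a \<noteq> 0" and "b \<noteq> 0"
    and "mtmU_den h d th a b n t \<noteq> 0"
    and "mtmR_den h d th a b n t \<noteq> 0" and "mtmR_den h d th a b (n+1) t \<noteq> 0"
    and "mtmQ_den h d th a b n t \<noteq> 0" and "mtmQ_den h d th a b (n+1) t \<noteq> 0"
  shows "semidiscrete_MTM_at h (mtmU h d th a b) (mtmR h d th a b) (mtmQ h d th a b) n t"
proof -
  interpret mtm_one_soliton h d th a b
    using assms(1-7) by unfold_locales
  have V_nz: "V n t \<noteq> 0"
    using assms(8) mtmU_den_eq by (metis mult_zero_right)
  have L_nz: "L k t \<noteq> 0" if "k = n \<or> k = n+1" for k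
    using that assms(9,10) by (auto simp: mtmR_den_eq)
  have M_nz: "M k t \<noteq> 0" if "k = n \<or> k = n+1" for k
    using that assms(11,12) by (auto simp: mtmQ_den_eq)
  show ?thesis
    unfolding semidiscrete_MTM_at_def
    using mtm_U_equation[OF V_nz L_nz L_nz M_nz M_nz] mtm_Q_equation[OF V_nz M_nz M_nz]
      mtm_R_equation[OF V_nz L_nz L_nz] by simp
qed
end
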